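(* Let $M=(S,\Sigma,\delta,s_0,F)$ be a deterministic finite automaton, let $T\ge 1$ be an integer, and for each $s\in S$ let $P(\cdot\mid s)$ and $Q(\cdot\mid s)$ be probability distributions on $\Sigma$. Define probability distributions $P$ and $Q$ on $\Sigma^T$ by $P(x)=\prod_{t=1}^T P(\sigma_t\mid s_t)$ and $Q(x)=\prod_{t=1}^T Q(\sigma_t\mid s_t)$ for $x=\sigma_1\cdots\sigma_T$, where $s_1\cdots s_{T+1}$ is the state sequence induced by $x$. Let $f^*:\Sigma^T\to\{0,1\}$ be $f^*(x)=\mathbb{1}(s_{T+1}\in F)$, and let $\hat f:\Sigma^T\to\{0,1\}$ be any function. Let $\epsilon=\max_{s\in S}\mathrm{TV}(P(\sigma\mid s),Q(\sigma\mid s))$. Then $$L_Q(\hat f)\le L_P(\hat f)+2T|S|^{T+1}\epsilon.$$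
   Context: A deterministic finite automaton $M=(S,\Sigma,\delta,s_0,F)$ has a finite state set $S$, a finite alphabet $\Sigma$, a transition function $\delta:S\times\Sigma\to S$, an initial state $s_0\in S$ and a set of final states $F\subseteq S$. For a string $x=\sigma_1\cdots\sigma_T$, the induced state sequence $s_1\cdots s_{T+1}$ is given by $s_1=s_0$ and $s_{t+1}=\delta(s_t,\sigma_t)$. For a distribution $D$ on $\Sigma^T$, $L_D(\hat f)=\mathbb{P}_{x\sim D}[\hat f(x)\neq f^*(x)]$. The total variation distance between discrete distributions is defined without the factor $1/2$: $\mathrm{TV}(\mu,\nu)=\sum_a|\mu(a)-\nu(a)|$. *)

theory Defs
  imports Main "HOL-Library.Indicator_Function"
begin

text \<open>For x = sigma_1 ... sigma_T (a list, index t-1 holds sigma_t),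
  state_seq gives s_1 ... s_(T+1), i.e. (state_seq delta s0 x) ! (t-1) = s_t.\<close>

fun state_seq :: "('s \<Rightarrow> 'a \<Rightarrow> 's) \<Rightarrow> 's \<Rightarrow> 'a list \<Rightarrow> 's list" where
  "state_seq delta s [] = [s]"
| "state_seq delta s (a # x) = s # state_seq delta (delta s a) x"

definition seq_prob :: "('s \<Rightarrow> 'a \<Rightarrow> 's) \<Rightarrow> 's \<Rightarrow> ('s \<Rightarrow> 'a \<Rightarrow> real) \<Rightarrow> 'a list \<Rightarrow> real" where
  "seq_prob delta s0 P x = (\<Prod>t<length x. P (state_seq delta s0 x ! t) (x ! t))"

definition target :: "('s \<Rightarrow> 'a \<Rightarrow> 's) \<Rightarrow> 's \<Rightarrow> 's set \<Rightarrow> 'a list \<Rightarrow> bool" where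
  "target delta s0 F x = (last (state_seq delta s0 x) \<in> F)"

definition loss :: "nat \<Rightarrow> ('a list \<Rightarrow> real) \<Rightarrow> ('a list \<Rightarrow> bool) \<Rightarrow> ('a list \<Rightarrow> bool) \<Rightarrow> real" where
  "loss T D fstar fhat = (\<Sum>x\<in>{x. length x = T}. D x * (if fhat x \<noteq> fstar x then 1 else 0))"

text \<open>Total variation without the factor 1/2.\<close>
definition tv :: "('a::finite \<Rightarrow> real) \<Rightarrow> ('a \<Rightarrow> real) \<Rightarrow> real" where
  "tv mu nu = (\<Sum>a\<in>UNIV. \<bar>mu a - nu a\<bar>)"

end

theory Submission
  imports Defs
begin

text \<open>The theorem holds with the much better bound \<open>T \<epsilon>\<close>: the loss difference is at most the
  (unnormalised) total variation distance between the two string distributions, and this distance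
  grows by at most \<open>\<epsilon>\<close> per letter. Peeling off the first letter \<open>a\<close> read in state \<open>s\<close>,
  \<open>|P(s,a) p'(x) - Q(s,a) q'(x)| \<le> P(s,a) |p'(x) - q'(x)| + |P(s,a) - Q(s,a)| q'(x)\<close>,
  where \<open>p', q'\<close> are the distributions of the remaining string started in \<open>\<delta>(s,a)\<close>; summing over
  \<open>a\<close> and the remaining strings gives \<open>D(n+1) \<le> D(n) + \<epsilon>\<close>.\<close>

lemma seq_prob_Nil [simp]: "seq_prob delta s P [] = 1"
  unfolding seq_prob_def by simp

lemma seq_prob_Cons [simp]:
  "seq_prob delta s P (a # x) = P s a * seq_prob delta (delta s a) P x"
  unfolding seq_prob_def by (simp del: prod.lessThan_Suc add: prod.lessThan_Suc_shift)

lemma seq_prob_nonneg: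
  assumes "\<And>s a. P s a \<ge> 0"
  shows "seq_prob delta s P x \<ge> 0"
  unfolding seq_prob_def by (intro prod_nonneg) (simp add: assms)

lemma sum_lists_length_Suc:
  fixes f :: "'a::finite list \<Rightarrow> 'b::comm_monoid_add"
  shows "(\<Sum>x\<in>{x. length x = Suc n}. f x) = (\<Sum>a\<in>UNIV. \<Sum>x\<in>{x. length x = n}. f (a # x))"
proof -
  have lists_eq: "{x. length x = Suc n} = (\<lambda>(a, x). a # x) ` (UNIV \<times> {x::'a list. length x = n})"
    by (auto simp: image_def length_Suc_conv)
  have "inj_on (\<lambda>(a, x). a # x) (UNIV \<times> {x::'a list. length x = n})"
    by (auto simp: inj_on_def)
  then show ?thesis
    unfolding lists_eq by (simp add: sum.reindex sum.cartesian_product split_def)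
qed

lemma sum_seq_prob:
  fixes delta :: "'s \<Rightarrow> 'a::finite \<Rightarrow> 's"
  assumes "\<And>s. (\<Sum>a\<in>UNIV. P s a) = 1"
  shows "(\<Sum>x\<in>{x. length x = n}. seq_prob delta s P x) = 1"
  by (induction n arbitrary: s)
    (simp_all add: sum_lists_length_Suc sum_distrib_left[symmetric] assms)

lemma tv_nonneg: "tv mu nu \<ge> 0"
  unfolding tv_def by (intro sum_nonneg) simp

lemma abs_mult_diff_le:
  fixes p q x y :: real
  assumes "p \<ge> 0" and "y \<ge> 0"
  shows "\<bar>p * x - q * y\<bar> \<le> p * \<bar>x - y\<bar> + \<bar>p - q\<bar> * y"
proof -
  have "p * x - q * y = p * (x - y) + (p - q) * y"
    by (simp add: algebra_simps)
  also have "\<bar>\<dots>\<bar> \<le> \<bar>p * (x - y)\<bar> + \<bar>(p - q) * y\<bar>"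
    by (rule abs_triangle_ineq)
  also have "\<dots> = p * \<bar>x - y\<bar> + \<bar>p - q\<bar> * y"
    using assms by (simp add: abs_mult)
  finally show ?thesis .
qed

lemma sum_abs_seq_prob_diff_le:
  fixes delta :: "'s \<Rightarrow> 'a::finite \<Rightarrow> 's"
  assumes P_nonneg: "\<And>s a. P s a \<ge> 0" and P_sum: "\<And>s. (\<Sum>a\<in>UNIV. P s a) = 1"
    and Q_nonneg: "\<And>s a. Q s a \<ge> 0" and Q_sum: "\<And>s. (\<Sum>a\<in>UNIV. Q s a) = 1"
    and tv_le: "\<And>s. tv (P s) (Q s) \<le> e"
  shows "(\<Sum>x\<in>{x. length x = n}. \<bar>seq_prob delta s P x - seq_prob delta s Q x\<bar>) \<le> real n * e"
proof (induction n arbitrary: s)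
  case 0
  then show ?case by simp
next
  case (Suc n)
  let ?p = "\<lambda>a. seq_prob delta (delta s a) P" and ?q = "\<lambda>a. seq_prob delta (delta s a) Q"
  let ?D = "\<lambda>a. \<Sum>x\<in>{x. length x = n}. \<bar>?p a x - ?q a x\<bar>"
  have "(\<Sum>x\<in>{x. length x = Suc n}. \<bar>seq_prob delta s P x - seq_prob delta s Q x\<bar>)
      = (\<Sum>a\<in>UNIV. \<Sum>x\<in>{x. length x = n}. \<bar>P s a * ?p a x - Q s a * ?q a x\<bar>)"
    by (simp add: sum_lists_length_Suc)
  also have "\<dots> \<le> (\<Sum>a\<in>UNIV. \<Sum>x\<in>{x. length x = n}.
      P s a * \<bar>?p a x - ?q a x\<bar> + \<bar>P s a - Q s a\<bar> * ?q a x)"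
    by (intro sum_mono abs_mult_diff_le P_nonneg seq_prob_nonneg Q_nonneg)
  also have "\<dots> = (\<Sum>a\<in>UNIV. P s a * ?D a + \<bar>P s a - Q s a\<bar>)"
    by (simp add: sum.distrib sum_distrib_left[symmetric] sum_distrib_right[symmetric]
        sum_seq_prob[OF Q_sum])
  also have "\<dots> \<le> (\<Sum>a\<in>UNIV. P s a * (real n * e) + \<bar>P s a - Q s a\<bar>)"
    by (intro sum_mono add_mono mult_left_mono Suc.IH P_nonneg order_refl)
  also have "\<dots> = real n * e + tv (P s) (Q s)"
    by (simp add: sum.distrib sum_distrib_right[symmetric] P_sum tv_def)
  also have "\<dots> \<le> real (Suc n) * e"
    using tv_le[of s] by (simp add: algebra_simps)
  finally show ?case .
qed

lemma loss_diff_le_sum_abs_diff: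
  "loss T D' fstar fhat - loss T D fstar fhat \<le> (\<Sum>x\<in>{x. length x = T}. \<bar>D x - D' x\<bar>)"
proof -
  have "loss T D' fstar fhat - loss T D fstar fhat
      = (\<Sum>x\<in>{x. length x = T}. (D' x - D x) * (if fhat x \<noteq> fstar x then 1 else 0))"
    unfolding loss_def by (simp add: sum_subtractf[symmetric] algebra_simps)
  also have "\<dots> \<le> (\<Sum>x\<in>{x. length x = T}. \<bar>D x - D' x\<bar>)"
    by (intro sum_mono) auto
  finally show ?thesis .
qed

theorem theorem4p3:
  fixes delta :: "'s::finite \<Rightarrow> 'a::finite \<Rightarrow> 's"
    and s0 :: 's and F :: "'s set" and T :: nat
    and P Q :: "'s \<Rightarrow> 'a \<Rightarrow> real"
    and fhat :: "'a list \<Rightarrow> bool"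
  assumes "T \<ge> 1"
    and "\<And>s a. P s a \<ge> 0" and "\<And>s. (\<Sum>a\<in>UNIV. P s a) = 1"
    and "\<And>s a. Q s a \<ge> 0" and "\<And>s. (\<Sum>a\<in>UNIV. Q s a) = 1"
  shows "loss T (seq_prob delta s0 Q) (target delta s0 F) fhat
         \<le> loss T (seq_prob delta s0 P) (target delta s0 F) fhat
           + 2 * real T * real (card (UNIV :: 's set)) ^ (T + 1) * Max ((\<lambda>s. tv (P s) (Q s)) ` UNIV)"
proof -
  define \<epsilon> where "\<epsilon> = Max ((\<lambda>s. tv (P s) (Q s)) ` UNIV)"
  have tv_le: "tv (P s) (Q s) \<le> \<epsilon>" for s
    unfolding \<epsilon>_def by (rule Max_ge) auto
  have "0 \<le> \<epsilon>"
    using tv_nonneg tv_le order_trans by blast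
  have "1 \<le> real (card (UNIV :: 's set)) ^ (T + 1)"
    by (intro one_le_power) (simp add: Suc_le_eq finite_UNIV_card_ge_0)
  then have "real T * 1 \<le> real T * (2 * real (card (UNIV :: 's set)) ^ (T + 1))"
    by (intro mult_left_mono) simp_all
  then have slack: "real T * \<epsilon> \<le> 2 * real T * real (card (UNIV :: 's set)) ^ (T + 1) * \<epsilon>"
    using \<open>0 \<le> \<epsilon>\<close> by (intro mult_right_mono) simp_all
  have "loss T (seq_prob delta s0 Q) (target delta s0 F) fhat
      - loss T (seq_prob delta s0 P) (target delta s0 F) fhat \<le> real T * \<epsilon>"
    using loss_diff_le_sum_abs_diff sum_abs_seq_prob_diff_le[OF assms(2-5) tv_le]
    by (rule order_trans)
  with slack show ?thesis
    unfolding \<epsilon>_def by linarith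
qed

end
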